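(* For $k\ge4$ and $d\in[d_{\mathrm{lbd}}(k),d_{\mathrm{ubd}}(k)]$, $\Psi_d(\frac12-\frac1{2^k})>\frac12-\frac1{2^k}$.
   Context: $\hat\Psi(x)=\frac{1-2x^{k-1}}{1-x^{k-1}}$, $\dot\Psi(v)=\frac{1-v^{d-1}}{2-v^{d-1}}$, $\Psi_d=\dot\Psi\circ\hat\Psi$ ($d$ real). $d_{\mathrm{lbd}}(4)=16.7$, $d_{\mathrm{lbd}}(k)=(2^{k-1}-2)k\log2$ for $k\ge5$; $d_{\mathrm{ubd}}(k)=2^{k-1}k\log2$. *)

theory Defs
  imports Complex_Main
begin

definition Psi_hat :: "nat \<Rightarrow> real \<Rightarrow> real" where
  "Psi_hat k x = (1 - 2 * x ^ (k - 1)) / (1 - x ^ (k - 1))"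

definition Psi_dot :: "real \<Rightarrow> real \<Rightarrow> real" where
  "Psi_dot d v = (1 - v powr (d - 1)) / (2 - v powr (d - 1))"

definition Psi :: "nat \<Rightarrow> real \<Rightarrow> real \<Rightarrow> real" where
  "Psi k d = Psi_dot d \<circ> Psi_hat k"

definition d_lbd :: "nat \<Rightarrow> real" where
  "d_lbd k = (if k = 4 then 16.7 else (2 ^ (k - 1) - 2) * real k * ln 2)"

definition d_ubd :: "nat \<Rightarrow> real" where
  "d_ubd k = 2 ^ (k - 1) * real k * ln 2"

end

theory Submission
  imports Defs "HOL-Analysis.Harmonic_Numbers"
begin

text \<open>
  Put t = 1/2^(k-1), so that x = 1/2 - 1/2^k = (1 - t)/2 and y = x^(k-1) = t (1 - t)^(k-1).
  Then v = Psi_hat k x = (1 - 2y)/(1 - y), and Psi_dot d v > x is equivalent to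
  v^(d-1) < 2t/(1 + t).  As 0 <= v <= 1, the left-hand side decreases in d, so only
  d = d_lbd k matters.  For k >= 5 the estimates
  ln v <= -y and (Bernoulli) y >= t (1 - (k - 1) t) give
  (d - 1) y > (k - 2) ln 2 + t >= -ln (2t/(1 + t)).  For k = 4 the inequality reads
  (3410/3753)^15.7 < 2/9, which holds with a margin of only about 6e-4 in the logarithm;
  it is checked by repeated squaring with rational upper bounds.
\<close>

lemma Psi_dot_gt_half_minus:
  fixes t d v :: real
  assumes "0 < t" "t \<le> 1" "v powr (d - 1) < 2 * t / (1 + t)"
  shows "Psi_dot d v > (1 - t) / 2"
proof -
  define w where "w = v powr (d - 1)"
  have "0 \<le> w" "w + t * w < 2 * t"
    using assms by (simp_all add: w_def field_simps)
  moreover have "0 \<le> t * w" using assms(1) \<open>0 \<le> w\<close> by simp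
  ultimately have "0 < 2 - w" "(1 - t) / 2 * (2 - w) < 1 - w"
    using assms(2) by (simp_all add: field_simps)
  then show ?thesis
    by (simp add: Psi_dot_def flip: w_def) (simp add: field_simps)
qed

lemma Psi_hat_nonneg_le_one:
  fixes x :: real
  assumes "2 \<le> k" "0 \<le> x" "x \<le> 1/2"
  shows "0 \<le> Psi_hat k x" "Psi_hat k x \<le> 1"
proof -
  have "x ^ (k - 1) \<le> x"
    using assms power_decreasing[of 1 "k - 1" x] by simp
  moreover have "0 \<le> x ^ (k - 1)" using assms(2) by simp
  ultimately show "0 \<le> Psi_hat k x" "Psi_hat k x \<le> 1"
    using assms(3) by (simp_all add: Psi_hat_def field_simps)
qed

lemma half_minus_pow_eq:
  "(1/2 - 1/2 ^ Suc n :: real) ^ n = 1/2^n * (1 - 1/2^n) ^ n"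
proof -
  have "(1/2 - 1/2 ^ Suc n :: real) = (1 - 1/2^n) / 2"
    by (simp add: field_simps)
  then show ?thesis by (simp only:) (simp add: power_divide)
qed

lemma ln_one_minus_two_div_le:
  fixes y :: real
  assumes "0 \<le> y" "y < 1/2"
  shows "ln ((1 - 2*y) / (1 - y)) \<le> - y"
proof -
  have "ln ((1 - 2*y) / (1 - y)) \<le> (1 - 2*y) / (1 - y) - 1"
    using assms by (intro ln_le_minus_one) simp
  also have "\<dots> = - (y / (1 - y))"
    using assms by (simp add: field_simps)
  also have "\<dots> \<le> - y"
    using assms by (simp add: field_simps)
  finally show ?thesis .
qed

lemma one_minus_two_div_powr_less:
  fixes y D c :: real
  assumes "0 \<le> y" "y < 1/2" "0 \<le> D" "0 < c" "- ln c < D * y"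
  shows "((1 - 2*y) / (1 - y)) powr D < c"
proof -
  have "0 < (1 - 2*y) / (1 - y)" using assms by simp
  then have "((1 - 2*y) / (1 - y)) powr D = exp (D * ln ((1 - 2*y) / (1 - y)))"
    using assms by (simp add: powr_def)
  also have "\<dots> \<le> exp (D * - y)"
    using assms ln_one_minus_two_div_le by (intro exp_mono mult_left_mono) auto
  also have "\<dots> < exp (ln c)" using assms(5) by (intro exp_less_mono) linarith
  also have "\<dots> = c" using assms by simp
  finally show ?thesis .
qed

lemma quadratic_le_pow2:
  fixes n :: nat
  assumes "5 \<le> n"
  shows "2 * ((n + 1) * (n + 2)) \<le> 3 * 2 ^ n"
  using assms
proof (induction n rule: nat_induct_at_least)
  case base
  then show ?case by simp
next
  case (Suc n)
  have "2 * ((Suc n + 1) * (Suc n + 2)) \<le> 2 * (2 * ((n + 1) * (n + 2)))"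
    using Suc.hyps by (simp add: algebra_simps)
  also have "\<dots> \<le> 3 * 2 ^ Suc n" using Suc.IH by simp
  finally show ?case .
qed

lemma ln2_exponent_gap:
  fixes n :: nat and t :: real
  assumes "4 \<le> n" "t = 1/2^n"
  shows "(real n - 1) * ln 2 + t < ((1 - 2*t) * (n + 1) * ln 2 - t) * (1 - n*t)"
proof -
  define L where "L = ln (2::real)"
  have L: "2/3 \<le> L" using ln2_ge_two_thirds by (simp add: L_def)
  have gap: "((1 - 2*t) * (n + 1) * L - t) * (1 - n*t) - ((real n - 1) * L + t)
      = L * (2 - (n + 1) * (n + 2) * t + 2 * n * (n + 1) * t\<^sup>2) - 2*t + n * t\<^sup>2"
    by (simp add: algebra_simps power2_eq_square)
  consider "n = 4" | "5 \<le> n" using assms(1) by linarith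
  then have "0 < L * (2 - (n + 1) * (n + 2) * t + 2 * n * (n + 1) * t\<^sup>2) - 2*t + n * t\<^sup>2"
  proof cases
    case 1
    have t: "t = 1/16" using assms(2) 1 by simp
    show ?thesis unfolding 1 t using L by (simp add: power2_eq_square)
  next
    case 2
    have "(2::real) ^ 5 \<le> 2 ^ n" using 2 by (intro power_increasing) auto
    then have t: "t \<le> 1/32" unfolding assms(2) by (simp add: field_simps)
    have "real (2 * ((n + 1) * (n + 2))) \<le> real (3 * 2 ^ n)"
      using quadratic_le_pow2[OF 2] by (simp only: of_nat_le_iff)
    then have "(n + 1) * (n + 2) * t \<le> 3/2"
      unfolding assms(2) by (simp add: field_simps)
    moreover have "0 \<le> real (2 * n * (n + 1)) * t\<^sup>2" by simp
    ultimately have "1/2 \<le> 2 - (n + 1) * (n + 2) * t + 2 * n * (n + 1) * t\<^sup>2" by linarith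
    then have "L / 2 \<le> L * (2 - (n + 1) * (n + 2) * t + 2 * n * (n + 1) * t\<^sup>2)"
      using mult_left_mono[of "1/2" _ L] L by simp
    moreover have "0 \<le> real n * t\<^sup>2" by simp
    ultimately show ?thesis using L t by linarith
  qed
  then show ?thesis using gap by (simp add: L_def)
qed

lemma one_minus_two_div_powr_less_d_lbd:
  fixes n :: nat and t y D :: real
  assumes "4 \<le> n" "t = 1/2^n" "y = t * (1 - t) ^ n"
    and "D = ((2::real) ^ n - 2) * (real n + 1) * ln 2 - 1"
  shows "((1 - 2*y) / (1 - y)) powr D < 2*t / (1 + t)"
proof (rule one_minus_two_div_powr_less)
  have "(2::real) ^ 4 \<le> 2 ^ n" using assms(1) by (intro power_increasing) auto
  then have t: "0 < t" "t \<le> 1/16" unfolding assms(2) by (simp_all add: field_simps)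
  have "(1 - t) ^ n \<le> 1" using t by (intro power_le_one) auto
  then have "y \<le> t" unfolding assms(3) using t by (intro mult_left_le) auto
  then show "y < 1/2" using t by linarith
  show "0 \<le> y" unfolding assms(3) using t by simp
  show "0 < 2*t / (1 + t)" using t by simp
  have "(14 * 5) * (2/3) \<le> ((2::real) ^ n - 2) * (real n + 1) * ln 2"
    using \<open>2 ^ 4 \<le> 2 ^ n\<close> assms(1) ln2_ge_two_thirds by (intro mult_mono) auto
  then show D: "0 \<le> D" using assms(4) by linarith
  have "ln t = - (n * ln 2)" unfolding assms(2) by (simp add: ln_div ln_realpow)
  then have "- ln (2*t / (1 + t)) = (real n - 1) * ln 2 + ln (1 + t)"
    using t by (simp add: ln_div ln_mult algebra_simps)
  also have "\<dots> \<le> (real n - 1) * ln 2 + t"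
    using t by (simp add: ln_add_one_self_le_self)
  also have "\<dots> < ((1 - 2*t) * (n + 1) * ln 2 - t) * (1 - n*t)"
    by (rule ln2_exponent_gap[OF assms(1,2)])
  also have "\<dots> = D * (t * (1 - n*t))"
  proof -
    have "D * t = (1 - 2*t) * (n + 1) * ln 2 - t"
      unfolding assms(2,4) by (simp add: field_simps)
    then show ?thesis by (simp add: mult.assoc[symmetric])
  qed
  also have "\<dots> \<le> D * y"
  proof -
    have "1 + n * (- t) \<le> (1 + - t) ^ n" using t by (intro Bernoulli_inequality) auto
    then have "t * (1 - n*t) \<le> y" using t assms(3) by (simp add: mult_left_mono)
    then show ?thesis using D by (intro mult_left_mono)
  qed
  finally show "- ln (2*t / (1 + t)) < D * y" .
qed

lemma power_double_le:
  fixes a b c :: real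
  assumes "0 \<le> a" "a ^ m \<le> b" "b\<^sup>2 \<le> c" "n = 2 * m"
  shows "a ^ n \<le> c"
proof -
  have "a ^ n = (a ^ m)\<^sup>2" by (simp add: assms(4) power_mult[symmetric] mult.commute)
  also have "\<dots> \<le> b\<^sup>2" using assms by (intro power_mono) auto
  finally show ?thesis using assms(3) by simp
qed

lemma power_157_less: "(3410/3753 :: real) ^ 157 < (2/9) ^ 10"
proof -
  let ?v = "3410/3753 :: real"
  have b1: "?v\<^sup>2 \<le> 10319571/12500000" by (simp add: power_divide)
  have b2: "?v ^ 4 \<le> 6815587/10000000"
    by (rule power_double_le[OF _ b1]) (simp_all add: power_divide)
  have b3: "?v ^ 8 \<le> 46452227/100000000"
    by (rule power_double_le[OF _ b2]) (simp_all add: power_divide)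
  have b4: "?v ^ 16 \<le> 10789047/50000000"
    by (rule power_double_le[OF _ b3]) (simp_all add: power_divide)
  have b5: "?v ^ 32 \<le> 2328071/50000000"
    by (rule power_double_le[OF _ b4]) (simp_all add: power_divide)
  have b6: "?v ^ 64 \<le> 216797/100000000"
    by (rule power_double_le[OF _ b5]) (simp_all add: power_divide)
  have b7: "?v ^ 128 \<le> 471/100000000"
    by (rule power_double_le[OF _ b6]) (simp_all add: power_divide)
  have "a ^ 157 = a ^ 128 * a ^ 16 * a ^ 8 * a ^ 4 * a" for a :: real
    by (simp flip: power_add power_Suc2)
  then have "?v ^ 157 = ?v ^ 128 * ?v ^ 16 * ?v ^ 8 * ?v ^ 4 * ?v" .
  also have "\<dots> \<le> 471/100000000 * (10789047/50000000) * (46452227/100000000)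
      * (6815587/10000000) * ?v"
    by (intro mult_right_mono mult_mono b7 b4 b3 b2) auto
  also have "\<dots> < (2/9) ^ 10" by (simp add: power_divide)
  finally show ?thesis .
qed

lemma powr_divide_less_of_power_less:
  fixes v c :: real and p q :: nat
  assumes "0 < v" "0 \<le> c" "0 < q" "v ^ p < c ^ q"
  shows "v powr (p / q) < c"
proof -
  have "v powr (p / q) = root q (v ^ p)"
    using assms by (simp add: root_powr_inverse powr_powr powr_realpow flip: powr_realpow)
  also have "\<dots> < root q (c ^ q)" using assms by (intro real_root_less_mono)
  also have "\<dots> = c" using assms by (simp add: real_root_power_cancel)
  finally show ?thesis .
qed

lemma Psi_hat_powr_d_lbd_less:
  fixes k :: nat
  assumes "4 \<le> k"
  shows "Psi_hat k (1/2 - 1/2^k) powr (d_lbd k - 1) < 2 * (1/2^(k - 1)) / (1 + 1/2^(k - 1))"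
proof -
  define n where "n = k - 1"
  define t :: real where "t = 1/2^n"
  define y where "y = t * (1 - t) ^ n"
  have k: "k = Suc n" using assms n_def by simp
  have v: "Psi_hat k (1/2 - 1/2^k) = (1 - 2*y) / (1 - y)"
    unfolding Psi_hat_def k y_def t_def by (simp only: half_minus_pow_eq diff_Suc_1)
  consider "n = 3" | "4 \<le> n" using assms k by linarith
  then have "((1 - 2*y) / (1 - y)) powr (d_lbd k - 1) < 2*t / (1 + t)"
  proof cases
    case 1
    have at_k4: "(1 - 2*y) / (1 - y) = 3410/3753" "d_lbd k - 1 = real 157 / real 10"
        "2*t / (1 + t) = 2/9"
      by (simp_all add: y_def t_def 1 k d_lbd_def power_divide)
    show ?thesis unfolding at_k4
      by (rule powr_divide_less_of_power_less[OF _ _ _ power_157_less]) simp_all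
  next
    case 2
    have "d_lbd k - 1 = ((2::real) ^ n - 2) * (real n + 1) * ln 2 - 1"
      using 2 k by (simp add: d_lbd_def)
    then show ?thesis using one_minus_two_div_powr_less_d_lbd[OF 2 t_def y_def] by simp
  qed
  then show ?thesis unfolding v t_def n_def .
qed

theorem lemma3p4:
  fixes k :: nat and d :: real
  assumes "k \<ge> 4" and "d_lbd k \<le> d" and "d \<le> d_ubd k"
  shows "Psi k d (1/2 - 1/2^k) > 1/2 - 1/2^k"
proof -
  define t :: real where "t = 1/2^(k - 1)"
  define v where "v = Psi_hat k (1/2 - 1/2^k)"
  have t: "0 < t" "t \<le> 1" unfolding t_def by simp_all
  have "(1 - t) / 2 = 1/2 - 1/2^k"
    unfolding t_def using assms(1) by (cases k) (simp_all add: field_simps)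
  then have "0 \<le> v" "v \<le> 1"
    unfolding v_def using assms(1) t by (intro Psi_hat_nonneg_le_one; simp)+
  then have "v powr (d - 1) \<le> v powr (d_lbd k - 1)"
    using assms(2) by (intro powr_mono') auto
  also have "\<dots> < 2 * t / (1 + t)"
    unfolding v_def t_def by (rule Psi_hat_powr_d_lbd_less[OF assms(1)])
  finally have "(1 - t) / 2 < Psi_dot d v" by (rule Psi_dot_gt_half_minus[OF t])
  with \<open>(1 - t) / 2 = _\<close> show ?thesis by (simp add: Psi_def v_def)
qed

end
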